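(* Let $\mathcal{C}$ be the smallest set of functions of finite arity on $[0,1]$ such that: (i) $\mathcal{C}$ contains all projections $p^n_i(x_0,\dots,x_{n-1})=x_i$; (ii) if $g\in\mathcal{C}$ is $n$-ary and $q\in\mathbb{Q}\cap[0,1]$, then $\mathbf{x}\mapsto\chi_q(g(\mathbf{x}))$ belongs to $\mathcal{C}$; (iii) if $g_1,g_2\in\mathcal{C}$ are $n$-ary and $q\in\mathbb{Q}\cap[0,1]$, then $\mathbf{x}\mapsto\mathsf{Med}_q(g_1(\mathbf{x}),g_2(\mathbf{x}))$ belongs to $\mathcal{C}$; (iv) if $I$ is a nonempty set with $|I|\le\mathfrak{c}$ and $g_i\in\mathcal{C}$, $i\in I$, are $n$-ary, then the pointwise supremum $\bigvee_{i\in I}g_i$ and the pointwise infimum $\bigwedge_{i\in I}g_i$ belong to $\mathcal{C}$. Then $\mathcal{C}=\mathsf{Agg}$; that is, $\mathsf{Agg}$ is generated by the countable set consisting of the infinitary operations $\bigvee$ and $\bigwedge$, the functions $\chi_q$ and the medians $\mathsf{Med}_q$, $q\in\mathbb{Q}\cap[0,1]$.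
   Context: An $n$-ary aggregation function on $[0,1]$ is a function $f\colon[0,1]^n\to[0,1]$ nondecreasing in each coordinate with $f(0,\dots,0)=0$ and $f(1,\dots,1)=1$; $\mathsf{Agg}$ is the set of all aggregation functions of all finite arities $n\in\mathbb{N}$ (unary ones not restricted to the identity). For $a\in[0,1]$, $\chi_a(x)=1$ if $x\ge a$ and $x\neq0$, and $\chi_a(x)=0$ otherwise. $\mathsf{Med}_b(x,y)$ is the median of $x,y,b$. $\mathfrak{c}=2^{\aleph_0}$. *)

theory Defs
  imports Complex_Main
begin

definition cube :: "nat \<Rightarrow> real list set" where
  "cube n = {xs. length xs = n \<and> set xs \<subseteq> {0..1}}"

definition chi :: "real \<Rightarrow> real \<Rightarrow> real" where
  "chi a x = (if x \<ge> a \<and> x \<noteq> 0 then 1 else 0)"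

definition Med :: "real \<Rightarrow> real \<Rightarrow> real \<Rightarrow> real" where
  "Med b x y = max (min x y) (min (max x y) b)"

text \<open>Convention: an n-ary function on [0,1] is represented by a function on real lists
  that vanishes outside cube n (so that extensional equality on [0,1]^n is HOL equality).\<close>
definition Agg :: "(nat \<times> (real list \<Rightarrow> real)) set" where
  "Agg = {(n, f). (\<forall>xs. xs \<notin> cube n \<longrightarrow> f xs = 0)
      \<and> (\<forall>xs\<in>cube n. f xs \<in> {0..1})
      \<and> (\<forall>xs\<in>cube n. \<forall>ys\<in>cube n. (\<forall>i<n. xs ! i \<le> ys ! i) \<longrightarrow> f xs \<le> f ys)
      \<and> f (replicate n 0) = 0 \<and> f (replicate n 1) = 1}"

text \<open>Index sets of cardinality at most continuum are represented as nonempty sets of reals.\<close>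
inductive_set Cgen :: "(nat \<times> (real list \<Rightarrow> real)) set" where
  proj: "i < n \<Longrightarrow> (n, \<lambda>xs. if xs \<in> cube n then xs ! i else 0) \<in> Cgen"
| chi: "(n, g) \<in> Cgen \<Longrightarrow> q \<in> \<rat> \<Longrightarrow> 0 \<le> q \<Longrightarrow> q \<le> 1
        \<Longrightarrow> (n, \<lambda>xs. chi q (g xs)) \<in> Cgen"
| med: "(n, g1) \<in> Cgen \<Longrightarrow> (n, g2) \<in> Cgen \<Longrightarrow> q \<in> \<rat> \<Longrightarrow> 0 \<le> q \<Longrightarrow> q \<le> 1
        \<Longrightarrow> (n, \<lambda>xs. Med q (g1 xs) (g2 xs)) \<in> Cgen"
| sup: "(I :: real set) \<noteq> {} \<Longrightarrow> (\<forall>i\<in>I. (n, g i) \<in> Cgen)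
        \<Longrightarrow> (n, \<lambda>xs. SUP i\<in>I. g i xs) \<in> Cgen"
| inf: "(I :: real set) \<noteq> {} \<Longrightarrow> (\<forall>i\<in>I. (n, g i) \<in> Cgen)
        \<Longrightarrow> (n, \<lambda>xs. INF i\<in>I. g i xs) \<in> Cgen"

end

theory Submission
  imports Defs
begin

(* Soundness: each generating operation preserves monotonicity, the boundary values and
   vanishing outside the cube.
   Completeness: for an aggregation function f and a point a of [0,1]^n, the step function
   that is 1 at the top, f(a) on the up-set {x. a <= x, x <> 0} and 0 elsewhere is the median
   with parameter f(a) of the indicators of the top and of that up-set. It lies below f by
   monotonicity and agrees with f at a, so f is the supremum of these step functions over a.
   Real thresholds and median parameters are reached as infima and suprema of rational ones. *)

lemma chi_eq_of_bool: "chi a x = of_bool (a \<le> x \<and> x \<noteq> 0)"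
  by (simp add: chi_def)

lemma Med_mono: "x \<le> x' \<Longrightarrow> y \<le> y' \<Longrightarrow> Med b x y \<le> Med b x' y'"
  by (auto simp: Med_def max_def min_def)

lemma Med_mono_param: "b \<le> b' \<Longrightarrow> Med b x y \<le> Med b' x y"
  by (auto simp: Med_def max_def min_def)

lemma Med_idem [simp]: "Med b x x = x"
  by (simp add: Med_def)

lemma Med_between: "min x y \<le> Med b x y \<and> Med b x y \<le> max x y"
  by (auto simp: Med_def max_def min_def)

lemma INF_of_bool:
  "I \<noteq> {} \<Longrightarrow> (INF i\<in>I. of_bool (P i) :: real) = of_bool (\<forall>i\<in>I. P i)"
proof (cases "\<forall>i\<in>I. P i")
  case False
  then obtain i where "i \<in> I" "\<not> P i" by blast
  moreover assume "I \<noteq> {}"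
  ultimately show ?thesis
    by (intro cInf_eq_minimum) (auto simp: bdd_below_def)
qed simp

lemma SUP_of_bool:
  "I \<noteq> {} \<Longrightarrow> (SUP i\<in>I. of_bool (P i) :: real) = of_bool (\<exists>i\<in>I. P i)"
proof (cases "\<exists>i\<in>I. P i")
  case True
  then obtain i where "i \<in> I" "P i" by blast
  then show ?thesis
    by (intro cSup_eq_maximum) auto
qed simp

lemma SUP_rationals_upto:
  assumes "0 \<le> c"
  shows "(SUP r\<in>{r\<in>\<rat>. 0 \<le> r \<and> r \<le> c}. r) = (c :: real)"
proof -
  let ?R = "{r\<in>\<rat>. 0 \<le> r \<and> r \<le> c}"
  have "0 \<in> ?R" using assms by auto
  moreover have "\<exists>r\<in>?R. y < r" if "y < c" for y
    using Rats_dense_in_real[of "max y 0" c] that assms by (cases "0 < c") auto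
  ultimately show ?thesis
    by (intro cSup_eq_non_empty) (auto simp flip: not_less)
qed

lemma Med_eq_SUP_rationals:
  assumes "0 \<le> c"
  shows "Med c x y = (SUP r\<in>{r\<in>\<rat>. 0 \<le> r \<and> r \<le> c}. Med r x y)"
proof -
  let ?R = "{r\<in>\<rat>. 0 \<le> r \<and> r \<le> c}"
  have "Med (Sup ?R) x y = (SUP r\<in>?R. Med r x y)"
  proof (rule continuous_at_Sup_mono)
    show "mono (\<lambda>b. Med b x y)" by (auto intro: monoI Med_mono_param)
    show "continuous (at_left (Sup ?R)) (\<lambda>b. Med b x y)"
      unfolding Med_def by (intro continuous_intros)
    show "?R \<noteq> {}" "bdd_above ?R" using assms by (auto intro!: exI[of _ 0] bdd_aboveI[of _ c])
  qed
  then show ?thesis using SUP_rationals_upto[OF assms] by simp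
qed

lemma chi_eq_INF_rationals:
  assumes "0 < c"
  shows "chi c x = (INF q\<in>{q\<in>\<rat>. 0 < q \<and> q < c}. chi q x)"
proof -
  let ?Q = "{q\<in>\<rat>. 0 < q \<and> q < c}"
  have "?Q \<noteq> {}" using Rats_dense_in_real[OF assms] by auto
  moreover have "(c \<le> x \<and> x \<noteq> 0) \<longleftrightarrow> (\<forall>q\<in>?Q. q \<le> x \<and> x \<noteq> 0)"
  proof
    assume above: "\<forall>q\<in>?Q. q \<le> x \<and> x \<noteq> 0"
    show "c \<le> x \<and> x \<noteq> 0"
    proof
      show "x \<noteq> 0" using above \<open>?Q \<noteq> {}\<close> by blast
      show "c \<le> x"
      proof (rule ccontr)
        assume "\<not> c \<le> x"
        then obtain q where "q \<in> \<rat>" "max x 0 < q" "q < c"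
          using Rats_dense_in_real[of "max x 0" c] assms by auto
        then show False using above by auto
      qed
    qed
  qed (use assms in auto)
  ultimately show ?thesis
    by (simp add: chi_eq_of_bool INF_of_bool)
qed

lemma cube_nth: "xs \<in> cube n \<Longrightarrow> i < n \<Longrightarrow> 0 \<le> xs ! i \<and> xs ! i \<le> 1"
  unfolding cube_def using nth_mem by fastforce

lemma replicate_in_cube: "0 \<le> c \<Longrightarrow> c \<le> 1 \<Longrightarrow> replicate n c \<in> cube n"
  by (auto simp: cube_def set_replicate_conv_if)

lemma cube_eq_replicate_iff: "xs \<in> cube n \<Longrightarrow> xs = replicate n c \<longleftrightarrow> (\<forall>i<n. xs ! i = c)"
  by (auto simp: cube_def list_eq_iff_nth_eq)

lemma AggI:
  assumes "\<And>xs. xs \<notin> cube n \<Longrightarrow> f xs = 0"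
    and "\<And>xs. xs \<in> cube n \<Longrightarrow> 0 \<le> f xs \<and> f xs \<le> 1"
    and "\<And>xs ys. xs \<in> cube n \<Longrightarrow> ys \<in> cube n \<Longrightarrow> \<forall>i<n. xs ! i \<le> ys ! i \<Longrightarrow> f xs \<le> f ys"
    and "f (replicate n 0) = 0" and "f (replicate n 1) = 1"
  shows "(n, f) \<in> Agg"
  using assms unfolding Agg_def by auto

context
  fixes n f assumes Agg: "(n, f) \<in> Agg"
begin

lemma Agg_outside_cube: "xs \<notin> cube n \<Longrightarrow> f xs = 0"
  using Agg by (simp add: Agg_def)

lemma Agg_bounds: "0 \<le> f xs \<and> f xs \<le> 1"
  using Agg by (cases "xs \<in> cube n") (auto simp: Agg_def)

lemma Agg_mono: "xs \<in> cube n \<Longrightarrow> ys \<in> cube n \<Longrightarrow> \<forall>i<n. xs ! i \<le> ys ! i \<Longrightarrow> f xs \<le> f ys"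
  using Agg by (simp add: Agg_def)

lemma Agg_bottom: "f (replicate n 0) = 0"
  using Agg by (simp add: Agg_def)

lemma Agg_top: "f (replicate n 1) = 1"
  using Agg by (simp add: Agg_def)

lemma Agg_arity_pos: "0 < n"
  using Agg_bottom Agg_top by (cases n) auto

end

lemma Agg_eq_on_cube:
  assumes "(n, f) \<in> Agg" "(n, g) \<in> Agg" "\<And>xs. xs \<in> cube n \<Longrightarrow> f xs = g xs"
  shows "f = g"
  using assms Agg_outside_cube by (metis ext)

lemma Agg_proj: "i < n \<Longrightarrow> (n, \<lambda>xs. if xs \<in> cube n then xs ! i else 0) \<in> Agg"
  by (intro AggI) (auto dest: cube_nth simp: replicate_in_cube)

lemma Agg_chi:
  assumes "(n, g) \<in> Agg" "q \<le> 1"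
  shows "(n, \<lambda>xs. chi q (g xs)) \<in> Agg"
proof (rule AggI)
  fix xs ys assume "xs \<in> cube n" "ys \<in> cube n" "\<forall>i<n. xs ! i \<le> ys ! i"
  then have "g xs \<le> g ys" "0 \<le> g xs" using assms(1) Agg_mono Agg_bounds by auto
  then show "chi q (g xs) \<le> chi q (g ys)" by (auto simp: chi_def)
qed (use assms Agg_outside_cube[OF assms(1)] Agg_bottom[OF assms(1)] Agg_top[OF assms(1)]
      in \<open>auto simp: chi_def\<close>)

lemma Agg_Med:
  assumes "(n, g1) \<in> Agg" "(n, g2) \<in> Agg"
  shows "(n, \<lambda>xs. Med q (g1 xs) (g2 xs)) \<in> Agg"
proof (rule AggI)
  fix xs
  show "0 \<le> Med q (g1 xs) (g2 xs) \<and> Med q (g1 xs) (g2 xs) \<le> 1"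
    using Med_between[of "g1 xs" "g2 xs" q] Agg_bounds[OF assms(1)] Agg_bounds[OF assms(2)]
    by (meson min.bounded_iff max.bounded_iff order_trans)
next
  fix xs ys assume "xs \<in> cube n" "ys \<in> cube n" "\<forall>i<n. xs ! i \<le> ys ! i"
  then show "Med q (g1 xs) (g2 xs) \<le> Med q (g1 ys) (g2 ys)"
    using assms by (intro Med_mono Agg_mono)
qed (simp_all add: assms Agg_outside_cube[OF assms(1)] Agg_outside_cube[OF assms(2)]
    Agg_bottom[OF assms(1)] Agg_bottom[OF assms(2)] Agg_top[OF assms(1)] Agg_top[OF assms(2)])

lemma Agg_SUP:
  assumes "I \<noteq> {}" "\<And>i. i \<in> I \<Longrightarrow> (n, g i) \<in> Agg"
  shows "(n, \<lambda>xs. SUP i\<in>I. g i xs) \<in> Agg"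
proof (rule AggI)
  have bdd: "bdd_above ((\<lambda>i. g i xs) ` I)" for xs
    using assms(2) Agg_bounds by (intro bdd_aboveI2[where M=1]) blast
  fix xs
  obtain i where "i \<in> I" using assms(1) by blast
  then have "0 \<le> (SUP i\<in>I. g i xs)"
    using assms(2) Agg_bounds cSUP_upper[OF _ bdd] by (meson order_trans)
  moreover have "(SUP i\<in>I. g i xs) \<le> 1"
    using assms Agg_bounds by (intro cSUP_least) auto
  ultimately show "0 \<le> (SUP i\<in>I. g i xs) \<and> (SUP i\<in>I. g i xs) \<le> 1" ..
  fix ys assume "xs \<in> cube n" "ys \<in> cube n" "\<forall>i<n. xs ! i \<le> ys ! i"
  then show "(SUP i\<in>I. g i xs) \<le> (SUP i\<in>I. g i ys)"
    using assms Agg_mono by (intro cSUP_mono bdd) blast+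
qed (use assms(1) in \<open>simp_all add: Agg_outside_cube[OF assms(2)] Agg_bottom[OF assms(2)]
      Agg_top[OF assms(2)] cong: SUP_cong\<close>)

lemma Agg_INF:
  assumes "I \<noteq> {}" "\<And>i. i \<in> I \<Longrightarrow> (n, g i) \<in> Agg"
  shows "(n, \<lambda>xs. INF i\<in>I. g i xs) \<in> Agg"
proof (rule AggI)
  have bdd: "bdd_below ((\<lambda>i. g i xs) ` I)" for xs
    using assms(2) Agg_bounds by (intro bdd_belowI2[where m=0]) blast
  fix xs
  obtain i where "i \<in> I" using assms(1) by blast
  then have "(INF i\<in>I. g i xs) \<le> 1"
    using assms(2) Agg_bounds cINF_lower[OF bdd] by (meson order_trans)
  moreover have "0 \<le> (INF i\<in>I. g i xs)"
    using assms Agg_bounds by (intro cINF_greatest) auto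
  ultimately show "0 \<le> (INF i\<in>I. g i xs) \<and> (INF i\<in>I. g i xs) \<le> 1" by simp
  fix ys assume "xs \<in> cube n" "ys \<in> cube n" "\<forall>i<n. xs ! i \<le> ys ! i"
  then show "(INF i\<in>I. g i xs) \<le> (INF i\<in>I. g i ys)"
    using assms Agg_mono by (intro cINF_mono bdd) blast+
qed (use assms(1) in \<open>simp_all add: Agg_outside_cube[OF assms(2)] Agg_bottom[OF assms(2)]
      Agg_top[OF assms(2)] cong: INF_cong\<close>)

lemma Cgen_imp_Agg: "(n, f) \<in> Cgen \<Longrightarrow> (n, f) \<in> Agg"
  by (induction rule: Cgen.induct) (auto intro: Agg_proj Agg_chi Agg_Med Agg_SUP Agg_INF)

lemma Cgen_SUP_inj:
  fixes \<phi> :: "'a \<Rightarrow> real"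
  assumes "S \<noteq> {}" "inj_on \<phi> S" "\<And>s. s \<in> S \<Longrightarrow> (n, g s) \<in> Cgen"
  shows "(n, \<lambda>xs. SUP s\<in>S. g s xs) \<in> Cgen"
proof -
  have "(n, \<lambda>xs. SUP r\<in>\<phi> ` S. g (inv_into S \<phi> r) xs) \<in> Cgen"
    using assms by (intro Cgen.sup) (auto simp: inv_into_f_f)
  moreover have "(\<lambda>xs. SUP r\<in>\<phi> ` S. g (inv_into S \<phi> r) xs) = (\<lambda>xs. SUP s\<in>S. g s xs)"
    using assms(2) by (auto simp: image_image intro!: ext SUP_cong)
  ultimately show ?thesis by simp
qed

lemma Cgen_INF_inj:
  fixes \<phi> :: "'a \<Rightarrow> real"
  assumes "S \<noteq> {}" "inj_on \<phi> S" "\<And>s. s \<in> S \<Longrightarrow> (n, g s) \<in> Cgen"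
  shows "(n, \<lambda>xs. INF s\<in>S. g s xs) \<in> Cgen"
proof -
  have "(n, \<lambda>xs. INF r\<in>\<phi> ` S. g (inv_into S \<phi> r) xs) \<in> Cgen"
    using assms by (intro Cgen.inf) (auto simp: inv_into_f_f)
  moreover have "(\<lambda>xs. INF r\<in>\<phi> ` S. g (inv_into S \<phi> r) xs) = (\<lambda>xs. INF s\<in>S. g s xs)"
    using assms(2) by (auto simp: image_image intro!: ext INF_cong)
  ultimately show ?thesis by simp
qed

lemma cube_Suc: "cube (Suc k) = (\<Union>a\<in>{0..1}. (#) a ` cube k)"
  unfolding cube_def by (auto simp: length_Suc_conv)

lemma cube_nonempty: "cube k \<noteq> {}"
  using replicate_in_cube[of 0 k] by auto

(* [0,1]^k is not a set of reals: the supremum is split into k nested suprema over [0,1]. *)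
lemma Cgen_SUP_cube:
  "(\<And>b. b \<in> cube k \<Longrightarrow> (n, g b) \<in> Cgen) \<Longrightarrow> (n, \<lambda>xs. SUP b\<in>cube k. g b xs) \<in> Cgen"
proof (induction k arbitrary: g)
  case 0
  have "cube 0 = {[]}" unfolding cube_def by auto
  then show ?case using 0 by simp
next
  case (Suc k)
  have "(n, \<lambda>xs. SUP b\<in>cube k. g (a # b) xs) \<in> Cgen" if "a \<in> {0..1}" for a
    using Suc.IH[of "\<lambda>b. g (a # b)"] Suc.prems that unfolding cube_Suc by blast
  then have "(n, \<lambda>xs. SUP a\<in>{0..1::real}. SUP b\<in>cube k. g (a # b) xs) \<in> Cgen"
    by (intro Cgen.sup) auto
  moreover have "(SUP a\<in>{0..1::real}. SUP b\<in>cube k. g (a # b) xs) = (SUP b\<in>cube (Suc k). g b xs)" for xs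
  proof -
    have "bdd_above (\<Union>a\<in>{0..1}. (\<lambda>b. g b xs) ` (#) a ` cube k)"
      using Suc.prems Agg_bounds[OF Cgen_imp_Agg] unfolding cube_Suc by (intro bdd_aboveI[of _ 1]) blast
    then have "(SUP b\<in>cube (Suc k). g b xs) = (SUP a\<in>{0..1::real}. SUP b\<in>(#) a ` cube k. g b xs)"
      unfolding cube_Suc by (intro cSUP_UNION) (auto simp: cube_nonempty)
    then show ?thesis by (simp add: image_image)
  qed
  ultimately show ?case by simp
qed

lemma Cgen_chi_real:
  assumes "(n, g) \<in> Cgen" "0 \<le> c" "c \<le> 1"
  shows "(n, \<lambda>xs. chi c (g xs)) \<in> Cgen"
proof (cases "c = 0")
  case True
  then show ?thesis using assms(1) by (intro Cgen.chi) auto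
next
  case False
  then have "0 < c" using assms(2) by simp
  moreover obtain q where "q \<in> \<rat>" "0 < q" "q < c" using Rats_dense_in_real[OF \<open>0 < c\<close>] by blast
  ultimately show ?thesis
    using assms by (subst chi_eq_INF_rationals) (auto intro!: Cgen.inf Cgen.chi)
qed

lemma Cgen_Med_real:
  assumes "(n, g1) \<in> Cgen" "(n, g2) \<in> Cgen" "0 \<le> c" "c \<le> 1"
  shows "(n, \<lambda>xs. Med c (g1 xs) (g2 xs)) \<in> Cgen"
  using assms by (subst Med_eq_SUP_rationals) (auto intro!: Cgen.sup Cgen.med exI[of _ 0])

definition coord :: "nat \<Rightarrow> nat \<Rightarrow> real list \<Rightarrow> real" where
  "coord n i xs = (if xs \<in> cube n then xs ! i else 0)"

definition top_ind :: "nat \<Rightarrow> real list \<Rightarrow> real" where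
  "top_ind n xs = (INF i\<in>{..<n}. chi 1 (coord n i xs))"

definition nonzero_ind :: "nat \<Rightarrow> real list \<Rightarrow> real" where
  "nonzero_ind n xs = (SUP i\<in>{..<n}. chi 0 (coord n i xs))"

(* chi 0 tests x_i <> 0 rather than x_i >= 0, so a zero coordinate of a is replaced by the
   test x <> 0; this makes upset_ind the indicator of {x. a <= x, x <> 0}. *)
definition upset_ind :: "nat \<Rightarrow> real list \<Rightarrow> real list \<Rightarrow> real" where
  "upset_ind n a xs =
    (INF i\<in>{..<n}. if 0 < a ! i then chi (a ! i) (coord n i xs) else nonzero_ind n xs)"

definition step_at :: "nat \<Rightarrow> real list \<Rightarrow> real \<Rightarrow> real list \<Rightarrow> real" where
  "step_at n a c xs = Med c (top_ind n xs) (upset_ind n a xs)"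

lemma coord_Cgen: "i < n \<Longrightarrow> (n, coord n i) \<in> Cgen"
  unfolding coord_def[abs_def] by (rule Cgen.proj)

lemma top_ind_Cgen: "0 < n \<Longrightarrow> (n, top_ind n) \<in> Cgen"
  unfolding top_ind_def[abs_def]
  by (rule Cgen_INF_inj[where \<phi>=real]) (auto intro!: Cgen.chi coord_Cgen)

lemma nonzero_ind_Cgen: "0 < n \<Longrightarrow> (n, nonzero_ind n) \<in> Cgen"
  unfolding nonzero_ind_def[abs_def]
  by (rule Cgen_SUP_inj[where \<phi>=real]) (auto intro!: Cgen.chi coord_Cgen)

lemma upset_ind_Cgen:
  assumes "0 < n" "a \<in> cube n"
  shows "(n, upset_ind n a) \<in> Cgen"
  unfolding upset_ind_def[abs_def]
proof (rule Cgen_INF_inj[where \<phi>=real])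
  fix i assume "i \<in> {..<n}"
  then show "(n, \<lambda>xs. if 0 < a ! i then chi (a ! i) (coord n i xs) else nonzero_ind n xs) \<in> Cgen"
    using assms cube_nth[OF assms(2)]
    by (cases "0 < a ! i") (auto intro!: Cgen_chi_real coord_Cgen nonzero_ind_Cgen)
qed (use assms in auto)

lemma step_at_Cgen:
  "0 < n \<Longrightarrow> a \<in> cube n \<Longrightarrow> 0 \<le> c \<Longrightarrow> c \<le> 1 \<Longrightarrow> (n, step_at n a c) \<in> Cgen"
  unfolding step_at_def[abs_def] by (intro Cgen_Med_real top_ind_Cgen upset_ind_Cgen)

context
  fixes n xs assumes n: "0 < n" and xs: "xs \<in> cube n"
begin

lemma top_ind_eq: "top_ind n xs = of_bool (xs = replicate n 1)"
proof -
  have "top_ind n xs = (INF i\<in>{..<n}. of_bool (xs ! i = 1))"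
    unfolding top_ind_def using xs cube_nth[OF xs]
    by (intro INF_cong) (auto simp: chi_eq_of_bool coord_def intro: order.antisym)
  also have "\<dots> = of_bool (\<forall>i<n. xs ! i = 1)"
    using n by (subst INF_of_bool) auto
  finally show ?thesis
    by (simp add: cube_eq_replicate_iff[OF xs])
qed

lemma nonzero_ind_eq: "nonzero_ind n xs = of_bool (xs \<noteq> replicate n 0)"
proof -
  have "nonzero_ind n xs = (SUP i\<in>{..<n}. of_bool (xs ! i \<noteq> 0))"
    unfolding nonzero_ind_def using xs cube_nth[OF xs]
    by (intro SUP_cong) (auto simp: chi_eq_of_bool coord_def)
  also have "\<dots> = of_bool (\<exists>i<n. xs ! i \<noteq> 0)"
    using n by (subst SUP_of_bool) auto
  finally show ?thesis
    by (simp add: cube_eq_replicate_iff[OF xs])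
qed

lemma upset_ind_eq:
  assumes a: "a \<in> cube n"
  shows "upset_ind n a xs = of_bool ((\<forall>i<n. a ! i \<le> xs ! i) \<and> xs \<noteq> replicate n 0)"
proof -
  let ?P = "\<lambda>i. if 0 < a ! i then a ! i \<le> xs ! i else xs \<noteq> replicate n 0"
  have "upset_ind n a xs = (INF i\<in>{..<n}. of_bool (?P i))"
    unfolding upset_ind_def using xs
    by (intro INF_cong) (auto simp: chi_eq_of_bool coord_def nonzero_ind_eq)
  also have "\<dots> = of_bool (\<forall>i<n. ?P i)"
    using n by (subst INF_of_bool) auto
  also have "(\<forall>i<n. ?P i) \<longleftrightarrow> (\<forall>i<n. a ! i \<le> xs ! i) \<and> xs \<noteq> replicate n 0"
  proof
    assume P: "\<forall>i<n. ?P i"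
    have "xs \<noteq> replicate n 0"
      using P n by (cases "0 < a ! 0") fastforce+
    moreover have "a ! i \<le> xs ! i" if "i < n" for i
      using P that cube_nth[OF a that] cube_nth[OF xs that] by (cases "0 < a ! i") auto
    ultimately show "(\<forall>i<n. a ! i \<le> xs ! i) \<and> xs \<noteq> replicate n 0" by blast
  qed auto
  finally show ?thesis .
qed

lemma step_at_eq:
  assumes a: "a \<in> cube n" and c: "0 \<le> c" "c \<le> 1"
  shows "step_at n a c xs =
    (if xs = replicate n 1 then 1
     else if (\<forall>i<n. a ! i \<le> xs ! i) \<and> xs \<noteq> replicate n 0 then c else 0)"
proof (cases "xs = replicate n 1")
  case True
  then have "(\<forall>i<n. a ! i \<le> xs ! i) \<and> xs \<noteq> replicate n 0"
    using n cube_nth[OF a] by auto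
  then show ?thesis
    unfolding step_at_def top_ind_eq upset_ind_eq[OF a] using True by simp
next
  case False
  then show ?thesis
    using c by (auto simp: step_at_def top_ind_eq upset_ind_eq[OF a] Med_def)
qed

end

lemma step_at_le:
  assumes f: "(n, f) \<in> Agg" and a: "a \<in> cube n" and xs: "xs \<in> cube n"
  shows "step_at n a (f a) xs \<le> f xs"
proof -
  have "step_at n a (f a) xs =
    (if xs = replicate n 1 then 1
     else if (\<forall>i<n. a ! i \<le> xs ! i) \<and> xs \<noteq> replicate n 0 then f a else 0)"
    using Agg_arity_pos[OF f] Agg_bounds[OF f] by (intro step_at_eq xs a) auto
  then show ?thesis
    using Agg_mono[OF f a xs] Agg_top[OF f] Agg_bounds[OF f, of xs] by auto
qed

lemma step_at_self:
  assumes f: "(n, f) \<in> Agg" and xs: "xs \<in> cube n"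
  shows "step_at n xs (f xs) xs = f xs"
proof -
  have "step_at n xs (f xs) xs =
    (if xs = replicate n 1 then 1 else if xs \<noteq> replicate n 0 then f xs else 0)"
    using Agg_arity_pos[OF f] Agg_bounds[OF f] by (subst step_at_eq[OF _ xs xs]) auto
  then show ?thesis
    using Agg_top[OF f] Agg_bottom[OF f] by auto
qed

lemma Agg_eq_SUP_step_at:
  assumes f: "(n, f) \<in> Agg" and xs: "xs \<in> cube n"
  shows "f xs = (SUP a\<in>cube n. step_at n a (f a) xs)"
proof (rule cSup_eq_maximum[symmetric])
  show "f xs \<in> (\<lambda>a. step_at n a (f a) xs) ` cube n"
    using step_at_self[OF f xs] xs by (intro image_eqI[where x=xs]) simp_all
  show "y \<le> f xs" if "y \<in> (\<lambda>a. step_at n a (f a) xs) ` cube n" for y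
    using that step_at_le[OF f _ xs] by blast
qed

lemma Agg_imp_Cgen:
  assumes f: "(n, f) \<in> Agg"
  shows "(n, f) \<in> Cgen"
proof -
  have g: "(n, \<lambda>xs. SUP a\<in>cube n. step_at n a (f a) xs) \<in> Cgen"
  proof (rule Cgen_SUP_cube)
    fix a assume "a \<in> cube n"
    then show "(n, step_at n a (f a)) \<in> Cgen"
      using Agg_arity_pos[OF f] Agg_bounds[OF f] by (simp add: step_at_Cgen)
  qed
  moreover have "f = (\<lambda>xs. SUP a\<in>cube n. step_at n a (f a) xs)"
    by (rule Agg_eq_on_cube[OF f Cgen_imp_Agg[OF g] Agg_eq_SUP_step_at[OF f]])
  ultimately show ?thesis by simp
qed

theorem corollary1:
  shows "Cgen = Agg"
  unfolding set_eq_iff split_paired_All using Cgen_imp_Agg Agg_imp_Cgen by blast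

end
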